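(* Let $\lambda\in(0,1)$ and $s=(s_1,s_2)\in\mathbb{R}^2$ with $|s|=1$, $s\neq e_1$, and either $s=e_2$ or $s_1s_2\neq0$. (i) For every $\gamma\in K_{s,\lambda}$ and $R\in SO(2)$ there exists $N\in\mathcal{M}_{e_1}\cap\mathcal{N}_s$ such that $Ne_1=Re_1$ and $\lambda N+(1-\lambda)R=R(\mathbb{I}+\gamma e_1\otimes e_2)$. (ii) Let $N\in\mathcal{N}_s$ and $R\in SO(2)$ with $Re_1=Ne_1$. Then there exists $\gamma\in K_{s,\lambda}$ such that $\lambda N+(1-\lambda)R=R(\mathbb{I}+\gamma e_1\otimes e_2)$.
   Context: $\mathcal{M}_{e_1}=\{F\in\mathbb{R}^{2\times2}:\det F=1,|Fe_1|=1\}$; $\mathcal{N}_s=\{F\in\mathbb{R}^{2\times2}:\det F=1,|Fs|\le1\}$. $K_{s,\lambda}=\{0\}$ if $s=e_2$; $K_{s,\lambda}=[-2\frac{s_1}{s_2}\lambda,0]$ if $s_1s_2>0$; $K_{s,\lambda}=[0,-2\frac{s_1}{s_2}\lambda]$ if $s_1s_2<0$. *)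

theory Defs
  imports "HOL-Analysis.Analysis"
begin

definition e1 :: "real^2" where "e1 = axis 1 1"
definition e2 :: "real^2" where "e2 = axis 2 1"

definition outer :: "real^2 \<Rightarrow> real^2 \<Rightarrow> real^2^2" where
  "outer u v = (\<chi> i j. u $ i * v $ j)"

definition SO2 :: "(real^2^2) set" where
  "SO2 = {R. orthogonal_matrix R \<and> det R = 1}"

definition M_e1 :: "(real^2^2) set" where
  "M_e1 = {F. det F = 1 \<and> norm (F *v e1) = 1}"

definition N_s :: "real^2 \<Rightarrow> (real^2^2) set" where
  "N_s s = {F. det F = 1 \<and> norm (F *v s) \<le> 1}"

text \<open>K_{s,lambda}; the last branch never occurs under the standing hypotheses.\<close>
definition K :: "real^2 \<Rightarrow> real \<Rightarrow> real set" where
  "K s lam =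
    (if s = e2 then {0}
     else if s $ 1 * s $ 2 > 0 then {-2 * (s $ 1 / s $ 2) * lam .. 0}
     else if s $ 1 * s $ 2 < 0 then {0 .. -2 * (s $ 1 / s $ 2) * lam}
     else {})"

end

theory Submission
  imports Defs
begin

text \<open>Every matrix in question factors as \<open>R\<close> times the shear \<open>I + a e\<^sub>1\<otimes>e\<^sub>2\<close>:
  in (i) take \<open>N = R (I + (\<gamma>/\<lambda>) e\<^sub>1\<otimes>e\<^sub>2)\<close>; in (ii) \<open>R\<^sup>T N\<close> fixes \<open>e\<^sub>1\<close> and has determinant 1,
  so it is such a shear. Since \<open>R\<close> is an isometry, \<open>|N s| \<le> 1\<close> reduces to \<open>|s\<^sub>1 + a s\<^sub>2|\<^sup>2 + s\<^sub>2\<^sup>2 \<le> 1\<close>,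
  i.e. \<open>a s\<^sub>2 (2 s\<^sub>1 + a s\<^sub>2) \<le> 0\<close>, and this quadratic condition on \<open>a\<close> says exactly
  \<open>\<lambda> a \<in> K\<^sub>s\<^sub>,\<^sub>\<lambda>\<close>. The convex combination \<open>\<lambda> R (I + a e\<^sub>1\<otimes>e\<^sub>2) + (1-\<lambda>) R\<close> is \<open>R (I + \<lambda> a e\<^sub>1\<otimes>e\<^sub>2)\<close>.\<close>

definition shear :: "real \<Rightarrow> real^2^2" where
  "shear a = mat 1 + a *\<^sub>R outer e1 e2"

lemma norm_orthogonal_matrix_mult:
  fixes R :: "real^'n^'n"
  assumes "orthogonal_matrix R"
  shows "norm (R *v x) = norm x"
proof -
  have "orthogonal_transformation ((*v) R)"
    using assms orthogonal_transformation_matrix[of "(*v) R"] by simp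
  then show ?thesis by (simp add: orthogonal_transformation_norm)
qed

lemma convex_combination_mult_mat_1_plus:
  fixes R :: "real^'n^'m" and A :: "real^'n^'n"
  shows "lam *\<^sub>R (R ** (mat 1 + A)) + (1 - lam) *\<^sub>R R = R ** (mat 1 + lam *\<^sub>R A)"
  by (simp add: matrix_add_ldistrib matrix_scalar_ac scalar_matrix_assoc algebra_simps)

lemma mat2_eq_iff:
  "(A::real^2^2) = B \<longleftrightarrow> A$1$1 = B$1$1 \<and> A$1$2 = B$1$2 \<and> A$2$1 = B$2$1 \<and> A$2$2 = B$2$2"
  by (auto simp: vec_eq_iff forall_2)

lemma matrix_vector_mult_2:
  "((A::real^2^2) *v x)$1 = A$1$1 * x$1 + A$1$2 * x$2"
  "((A::real^2^2) *v x)$2 = A$2$1 * x$1 + A$2$2 * x$2"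
  by (simp_all add: matrix_vector_mult_def sum_2)

lemma e1_e2_components: "e1$1 = 1" "e1$2 = 0" "e2$1 = 0" "e2$2 = 1"
  by (simp_all add: e1_def e2_def axis_def)

lemma norm_vec2_le_1_iff: "norm (x::real^2) \<le> 1 \<longleftrightarrow> (x$1)\<^sup>2 + (x$2)\<^sup>2 \<le> 1"
  and norm_vec2_eq_1_iff: "norm (x::real^2) = 1 \<longleftrightarrow> (x$1)\<^sup>2 + (x$2)\<^sup>2 = 1"
  by (simp_all add: norm_eq_sqrt_inner inner_vec_def sum_2 power2_eq_square)

lemma shear_components:
  "shear a $1$1 = 1" "shear a $1$2 = a" "shear a $2$1 = 0" "shear a $2$2 = 1"
  by (simp_all add: shear_def mat_def outer_def e1_e2_components)

lemma shear_mult_e1: "shear a *v e1 = e1"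
  by (simp add: vec_eq_iff forall_2 matrix_vector_mult_2 shear_components e1_e2_components)

lemma det_shear: "det (shear a) = 1"
  by (simp add: det_2 shear_components)

lemma convex_combination_mult_shear:
  "lam *\<^sub>R (R ** shear a) + (1 - lam) *\<^sub>R R = R ** shear (lam * a)"
  unfolding shear_def convex_combination_mult_mat_1_plus by simp

lemma mult_shear_mult_e1: "(R ** shear a) *v e1 = R *v e1"
  by (simp add: matrix_vector_mul_assoc[symmetric] shear_mult_e1)

lemma det_1_fixing_e1_eq_shear:
  fixes M :: "real^2^2"
  assumes "M *v e1 = e1" and "det M = 1"
  shows "M = shear (M$1$2)"
proof -
  have "M$1$1 = 1" "M$2$1 = 0"
    using arg_cong[OF assms(1), of "\<lambda>v. v$1"] arg_cong[OF assms(1), of "\<lambda>v. v$2"]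
    by (simp_all add: matrix_vector_mult_2 e1_e2_components)
  with assms(2) show ?thesis
    by (simp add: mat2_eq_iff shear_components det_2)
qed

lemma norm_shear_mult_le_1_iff:
  fixes s :: "real^2"
  assumes "norm s = 1"
  shows "norm (shear a *v s) \<le> 1 \<longleftrightarrow> a * s$2 * (2 * s$1 + a * s$2) \<le> 0"
proof -
  have "(s$1 + a * s$2)\<^sup>2 + (s$2)\<^sup>2 = (s$1)\<^sup>2 + (s$2)\<^sup>2 + a * s$2 * (2 * s$1 + a * s$2)"
    by (simp add: power2_eq_square algebra_simps)
  with assms show ?thesis
    by (simp add: norm_vec2_le_1_iff norm_vec2_eq_1_iff matrix_vector_mult_2 shear_components)
qed

lemma mult_add_double_le_0_iff:
  fixes a t :: real
  shows "t > 0 \<Longrightarrow> a * (a + 2 * t) \<le> 0 \<longleftrightarrow> -2 * t \<le> a \<and> a \<le> 0"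
    and "t < 0 \<Longrightarrow> a * (a + 2 * t) \<le> 0 \<longleftrightarrow> 0 \<le> a \<and> a \<le> -2 * t"
  by (auto simp: mult_le_0_iff)

lemma mult_mem_K_iff:
  fixes s :: "real^2"
  assumes "0 < lam" and "s = e2 \<or> s$1 * s$2 \<noteq> 0"
  shows "lam * a \<in> K s lam \<longleftrightarrow> a * s$2 * (2 * s$1 + a * s$2) \<le> 0"
proof (cases "s = e2")
  case True
  with \<open>0 < lam\<close> show ?thesis by (auto simp: K_def e1_e2_components mult_le_0_iff)
next
  case False
  with assms(2) have "s$1 * s$2 \<noteq> 0" by blast
  then have "s$2 \<noteq> 0" by auto
  define t where "t = s$1 / s$2"
  have s1: "s$1 = t * s$2" and sign: "s$1 * s$2 = t * (s$2)\<^sup>2"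
    using \<open>s$2 \<noteq> 0\<close> by (simp_all add: t_def power2_eq_square)
  have expand: "a * s$2 * (2 * s$1 + a * s$2) = (s$2)\<^sup>2 * (a * (a + 2 * t))"
    by (simp add: s1 power2_eq_square algebra_simps)
  have "(s$2)\<^sup>2 > 0"
    using \<open>s$2 \<noteq> 0\<close> by simp
  then have quadratic: "a * s$2 * (2 * s$1 + a * s$2) \<le> 0 \<longleftrightarrow> a * (a + 2 * t) \<le> 0"
    unfolding expand by (simp add: mult_le_0_iff)
  consider "t > 0" | "t < 0"
    using \<open>s$1 * s$2 \<noteq> 0\<close> sign by fastforce
  then show ?thesis
  proof cases
    case 1
    then have "s$1 * s$2 > 0" using sign \<open>s$2 \<noteq> 0\<close> by simp
    then have "lam * a \<in> K s lam \<longleftrightarrow> lam * (-2 * t) \<le> lam * a \<and> lam * a \<le> lam * 0"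
      using False by (simp add: K_def t_def algebra_simps)
    with 1 \<open>0 < lam\<close> show ?thesis
      by (simp only: quadratic mult_add_double_le_0_iff mult_le_cancel_left_pos)
  next
    case 2
    then have "s$1 * s$2 < 0" using sign \<open>s$2 \<noteq> 0\<close> by (simp add: mult_neg_pos)
    then have "lam * a \<in> K s lam \<longleftrightarrow> lam * 0 \<le> lam * a \<and> lam * a \<le> lam * (-2 * t)"
      using False by (simp add: K_def t_def algebra_simps)
    with 2 \<open>0 < lam\<close> show ?thesis
      by (simp only: quadratic mult_add_double_le_0_iff mult_le_cancel_left_pos)
  qed
qed

lemma norm_shear_mult_le_1_iff_mem_K:
  fixes s :: "real^2"
  assumes "0 < lam" and "norm s = 1" and "s = e2 \<or> s$1 * s$2 \<noteq> 0"
  shows "norm (shear a *v s) \<le> 1 \<longleftrightarrow> lam * a \<in> K s lam"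
  using norm_shear_mult_le_1_iff[OF assms(2)] mult_mem_K_iff[OF assms(1,3)] by simp

lemma norm_SO2_mult:
  assumes "R \<in> SO2"
  shows "norm ((R ** A) *v x) = norm (A *v x)"
  using assms norm_orthogonal_matrix_mult[of R "A *v x"]
  by (simp add: SO2_def matrix_vector_mul_assoc[symmetric])

lemma SO2_mult_shear_mem:
  assumes "R \<in> SO2" and "norm (shear a *v s) \<le> 1"
  shows "R ** shear a \<in> M_e1 \<inter> N_s s"
proof -
  have "det (R ** shear a) = 1"
    using assms(1) by (simp add: SO2_def det_mul det_shear)
  moreover have "norm ((R ** shear a) *v e1) = 1"
    using norm_SO2_mult[OF assms(1), of "shear a" e1]
    by (simp add: shear_mult_e1) (simp add: e1_def)
  ultimately show ?thesis
    using assms norm_SO2_mult[OF assms(1), of "shear a" s] by (simp add: M_e1_def N_s_def)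
qed

lemma det_1_eq_SO2_mult_shear:
  fixes N :: "real^2^2"
  assumes "R \<in> SO2" and "det N = 1" and "R *v e1 = N *v e1"
  obtains a where "N = R ** shear a"
proof -
  have orth: "transpose R ** R = mat 1" "R ** transpose R = mat 1" and "det R = 1"
    using assms(1) by (simp_all add: SO2_def orthogonal_matrix_def)
  define M where "M = transpose R ** N"
  have "M *v e1 = transpose R *v (R *v e1)"
    by (simp add: M_def assms(3) matrix_vector_mul_assoc)
  also have "\<dots> = e1"
    by (simp add: matrix_vector_mul_assoc orth)
  finally have "M = shear (M$1$2)"
    by (rule det_1_fixing_e1_eq_shear)
      (simp add: M_def det_mul det_transpose \<open>det R = 1\<close> assms(2))
  moreover have "R ** M = N"
    by (simp add: M_def matrix_mul_assoc orth)
  ultimately show thesis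
    using that by metis
qed

theorem lemma3p4:
  fixes lam :: real and s :: "real^2"
  assumes "0 < lam" and "lam < 1"
    and "norm s = 1" and "s \<noteq> e1"
    and "s = e2 \<or> s $ 1 * s $ 2 \<noteq> 0"
  shows "(\<forall>\<gamma>\<in>K s lam. \<forall>R\<in>SO2. \<exists>N\<in>M_e1 \<inter> N_s s.
            N *v e1 = R *v e1 \<and>
            lam *\<^sub>R N + (1 - lam) *\<^sub>R R = R ** (mat 1 + \<gamma> *\<^sub>R outer e1 e2))
       \<and> (\<forall>N\<in>N_s s. \<forall>R\<in>SO2. R *v e1 = N *v e1 \<longrightarrow>
            (\<exists>\<gamma>\<in>K s lam. lam *\<^sub>R N + (1 - lam) *\<^sub>R R = R ** (mat 1 + \<gamma> *\<^sub>R outer e1 e2)))"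
  unfolding shear_def[symmetric]
proof (intro conjI ballI impI)
  fix \<gamma> R assume "\<gamma> \<in> K s lam" and "R \<in> SO2"
  define a where "a = \<gamma> / lam"
  have "\<gamma> = lam * a"
    using assms(1) by (simp add: a_def)
  with \<open>\<gamma> \<in> K s lam\<close> have "norm (shear a *v s) \<le> 1"
    using norm_shear_mult_le_1_iff_mem_K[OF assms(1,3,5)] by simp
  with \<open>R \<in> SO2\<close> have "R ** shear a \<in> M_e1 \<inter> N_s s"
    by (rule SO2_mult_shear_mem)
  with \<open>\<gamma> = lam * a\<close> show "\<exists>N\<in>M_e1 \<inter> N_s s. N *v e1 = R *v e1 \<and>
      lam *\<^sub>R N + (1 - lam) *\<^sub>R R = R ** shear \<gamma>"
    by (metis mult_shear_mult_e1 convex_combination_mult_shear)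
next
  fix N R assume "N \<in> N_s s" and "R \<in> SO2" and "R *v e1 = N *v e1"
  then obtain a where N: "N = R ** shear a"
    by (auto simp: N_s_def elim: det_1_eq_SO2_mult_shear)
  then have "lam * a \<in> K s lam"
    using \<open>N \<in> N_s s\<close> norm_SO2_mult[OF \<open>R \<in> SO2\<close>, of "shear a" s]
      norm_shear_mult_le_1_iff_mem_K[OF assms(1,3,5)]
    by (simp add: N_s_def)
  with N show "\<exists>\<gamma>\<in>K s lam. lam *\<^sub>R N + (1 - lam) *\<^sub>R R = R ** shear \<gamma>"
    by (metis convex_combination_mult_shear)
qed

end
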